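(* Let $(\overline M,\varphi,\xi,\eta,g)$ be an almost $(\epsilon)$-contact metric manifold, $k\ge1$, $M$ as in the context, and $D=\bigoplus_{i=0}^kD_i$ a $k$-slant distribution on $M$ (with invariant component $D_0$) such that $D\perp\xi$. Let $G$ be the $g$-orthogonal complement of $D\oplus\langle\xi\rangle$ in $T\overline M|_M$, and let $f,w$ denote the orthogonal projections of $\varphi$ onto $D$ and onto $D^\perp$. Then $w(D_1),\dots,w(D_k)$ are mutually orthogonal subspaces of $G$ and $$G=\bigoplus_{i=1}^k w(D_i)\oplus H\quad(\text{orthogonal sum}),$$ where $H$ is the orthogonal complement of $\bigoplus_{i=1}^kw(D_i)$ in $G$, and $f(H)=\{0\}$. Moreover $\varphi(H)=w(H)=H$.
   Context: An almost $(\epsilon)$-contact metric manifold $(\overline M,\varphi,\xi,\eta,g)$, $\epsilon\in\{-1,1\}$, is a Riemannian manifold $(\overline M,g)$ with a unit vector field $\xi$, its dual 1-form $\eta(X)=g(X,\xi)$, and a $(1,1)$-tensor field $\varphi$ with $g(\varphi X,Y)=\epsilon g(X,\varphi Y)$ and $\varphi^2=\epsilon(I-\eta\otimes\xi)$. $M$ is either $\overline M$ or an immersed submanifold with $\xi$ tangent to $M$; $\langle\xi\rangle$ is the line bundle spanned by $\xi$. A distribution on $M$ is a smooth subbundle of constant rank of $T\overline M|_M$. For a distribution $D$ and $Z\in T_x\overline M$, $fZ$, $wZ$ are the $g$-orthogonal projections of $\varphi Z$ onto $D_x$ and onto its orthogonal complement $D_x^\perp$ in $T_x\overline M$; $f$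 is the component of $\varphi$ into $D$. The angle between a nonzero vector $u$ and a subspace $V$ is $\theta\in[0,\frac\pi2]$ with $\cos\theta=\|\mathrm{pr}_Vu\|/\|u\|$. A non-null distribution $D$ is slant with slant angle $\theta\in(0,\frac\pi2]$ if for all $x\in M$, $v\in D_x\setminus\{0\}$: $\varphi v\ne0$ and the angle between $\varphi v$ and $D_x$ is $\theta$. For $k\ge1$, $D$ is a $k$-slant distribution if there is a $g$-orthogonal decomposition $D=\bigoplus_{i=0}^kD_i$ into distributions with $D_i\ne\{0\}$ ($1\le i\le k$), $D_0$ possibly $\{0\}$, and pairwise distinct $\theta_1,\dots,\theta_k\in(0,\frac\pi2]$ with: (i) $D_i$ slant with angle $\theta_i$ ($1\le i\le k$); (ii) $\varphi(D_0)\subseteq D_0$; (iii) $f(D_i)\subseteq D_i$ ($1\le i\le k$). $D_0$ is the invariant component. *)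

theory Defs
  imports "HOL-Analysis.Analysis"
begin

text \<open>Pointwise linear algebra on a model tangent space 'v (finite-dimensional real
inner product space); the metric g is the inner product.\<close>

definition orth_compl :: "'v::real_inner set \<Rightarrow> 'v set" where
  "orth_compl V = {u. \<forall>v\<in>V. u \<bullet> v = 0}"

definition proj :: "'v::real_inner set \<Rightarrow> 'v \<Rightarrow> 'v" where
  "proj V u = (THE p. p \<in> V \<and> u - p \<in> orth_compl V)"

definition vs_angle :: "'v::real_inner \<Rightarrow> 'v set \<Rightarrow> real" where
  "vs_angle u V = arccos (norm (proj V u) / norm u)"

definition almost_eps_contact :: "real \<Rightarrow> ('v::real_inner \<Rightarrow> 'v) \<Rightarrow> 'v \<Rightarrow> bool" where
  "almost_eps_contact \<epsilon> \<phi> \<xi> \<longleftrightarrow>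
     (\<epsilon> = 1 \<or> \<epsilon> = -1) \<and> linear \<phi> \<and> norm \<xi> = 1 \<and>
     (\<forall>X Y. \<phi> X \<bullet> Y = \<epsilon> * (X \<bullet> \<phi> Y)) \<and>
     (\<forall>X. \<phi> (\<phi> X) = \<epsilon> *\<^sub>R (X - (X \<bullet> \<xi>) *\<^sub>R \<xi>))"

definition slant_at :: "('v::real_inner \<Rightarrow> 'v) \<Rightarrow> 'v set \<Rightarrow> real \<Rightarrow> bool" where
  "slant_at \<phi> V \<theta> \<longleftrightarrow> V \<noteq> {0} \<and> 0 < \<theta> \<and> \<theta> \<le> pi/2 \<and>
     (\<forall>v\<in>V - {0}. \<phi> v \<noteq> 0 \<and> vs_angle (\<phi> v) V = \<theta>)"

text \<open>k-slant distribution D = D_0 + ... + D_k over the point set M, with fixed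
angles theta_1..theta_k; f is the D-component of phi.\<close>
definition k_slant :: "'x set \<Rightarrow> ('x \<Rightarrow> 'v::real_inner \<Rightarrow> 'v) \<Rightarrow> nat \<Rightarrow>
     (nat \<Rightarrow> 'x \<Rightarrow> 'v set) \<Rightarrow> (nat \<Rightarrow> real) \<Rightarrow> bool" where
  "k_slant M \<phi> k Di \<theta> \<longleftrightarrow> 1 \<le> k \<and> inj_on \<theta> {1..k} \<and>
     (\<forall>x\<in>M.
        (\<forall>i\<in>{0..k}. subspace (Di i x)) \<and>
        (\<forall>i\<in>{0..k}. \<forall>j\<in>{0..k}. i \<noteq> j \<longrightarrow> (\<forall>a\<in>Di i x. \<forall>b\<in>Di j x. a \<bullet> b = 0)) \<and>
        (\<forall>i\<in>{1..k}. slant_at (\<phi> x) (Di i x) (\<theta> i)) \<and>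
        \<phi> x ` Di 0 x \<subseteq> Di 0 x \<and>
        (\<forall>i\<in>{1..k}. (\<lambda>v. proj (span (\<Union>j\<in>{0..k}. Di j x)) (\<phi> x v)) ` Di i x \<subseteq> Di i x))"

end

theory Submission
  imports Defs
begin

text \<open>Two algebraic identities of an almost (\<open>\<epsilon>\<close>)-contact structure drive everything:
  \<open>\<phi> X \<bullet> \<phi> Y = X \<bullet> Y - \<eta> X \<eta> Y\<close>, and \<open>\<phi>\<close> is (up to the sign \<open>\<epsilon>\<close>) self-adjoint.
  The first makes \<open>w\<close> carry the orthogonality of the \<open>D\<^sub>i\<close> over to the \<open>w(D\<^sub>i)\<close>,
  because \<open>f\<close> preserves each \<open>D\<^sub>i\<close>. For the second, note that \<open>w\<close> kills the invariant
  component \<open>D\<^sub>0\<close>, so \<open>\<phi>(D) \<subseteq> D \<oplus> \<Oplus> w(D\<^sub>i)\<close>; as \<open>H\<close> is orthogonal to this space,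
  self-adjointness gives \<open>\<phi>(H) \<perp> D\<close>, i.e. \<open>f(H) = 0\<close>. Similarly \<open>\<phi>(H)\<close> is orthogonal to
  \<open>\<xi>\<close> and to every \<open>w v = \<phi> v - f v\<close>, so \<open>\<phi>(H) \<subseteq> H\<close>; finally \<open>\<phi>\<^sup>2 = \<epsilon>\<close> on \<open>H\<close> turns this
  inclusion into an equality.\<close>

lemma subspace_orth_compl: "subspace (orth_compl (S::'v::real_inner set))"
  unfolding subspace_def orth_compl_def by (auto simp: inner_add_left)

lemma orth_compl_span: "orth_compl (span (S::'v::real_inner set)) = orth_compl S"
proof
  show "orth_compl (span S) \<subseteq> orth_compl S"
    unfolding orth_compl_def using span_superset by blast
  show "orth_compl S \<subseteq> orth_compl (span S)"
    unfolding orth_compl_def using orthogonal_to_span unfolding orthogonal_def by blast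
qed

lemma proj_unique:
  assumes "subspace S" "p \<in> S" "u - p \<in> orth_compl S"
  shows "proj S u = p"
  unfolding proj_def
proof (rule the_equality)
  show "p \<in> S \<and> u - p \<in> orth_compl S" using assms by simp
  fix q assume q: "q \<in> S \<and> u - q \<in> orth_compl S"
  have "q - p \<in> S" using assms q by (simp add: subspace_diff)
  moreover have "q - p = (u - p) - (u - q)" by simp
  then have "q - p \<in> orth_compl S" using assms q subspace_orth_compl by (metis subspace_diff)
  ultimately have "(q - p) \<bullet> (q - p) = 0" unfolding orth_compl_def by blast
  then show "q = p" by simp
qed

lemma proj_in_orth_decomp:
  fixes S :: "'v::euclidean_space set"
  assumes "subspace S"
  shows "proj S u \<in> S" and "u - proj S u \<in> orth_compl S"
proof -
  obtain y z where y: "y \<in> span S" and z: "\<And>w. w \<in> span S \<Longrightarrow> orthogonal z w"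
    and u: "u = y + z"
    using orthogonal_subspace_decomp_exists by blast
  have "y \<in> S" using y assms by (metis span_eq_iff)
  moreover have "u - y \<in> orth_compl S"
    using z u span_superset unfolding orth_compl_def orthogonal_def by auto
  ultimately show "proj S u \<in> S" "u - proj S u \<in> orth_compl S"
    using proj_unique[OF assms] by simp_all
qed

lemma proj_eq_0: "subspace S \<Longrightarrow> u \<in> orth_compl S \<Longrightarrow> proj S u = 0"
  by (rule proj_unique) (auto simp: subspace_0)

lemma proj_orth_compl:
  fixes S :: "'v::euclidean_space set"
  assumes "subspace S"
  shows "proj (orth_compl S) u = u - proj S u"
  using proj_in_orth_decomp[OF assms, of u]
  by (intro proj_unique[OF subspace_orth_compl]) (auto simp: orth_compl_def inner_commute)

lemma linear_proj:
  fixes S :: "'v::euclidean_space set"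
  assumes S: "subspace S"
  shows "linear (proj S)"
proof (rule linearI)
  note decomp = proj_in_orth_decomp[OF S]
  fix a b
  have "a + b - (proj S a + proj S b) = (a - proj S a) + (b - proj S b)"
    by (simp add: algebra_simps)
  then show "proj S (a + b) = proj S a + proj S b"
    using decomp[of a] decomp[of b] S subspace_orth_compl[of S]
    by (intro proj_unique[OF S]) (simp_all only: subspace_add)
next
  note decomp = proj_in_orth_decomp[OF S]
  fix c :: real and a
  have "c *\<^sub>R a - c *\<^sub>R proj S a = c *\<^sub>R (a - proj S a)" by (simp add: algebra_simps)
  then show "proj S (c *\<^sub>R a) = c *\<^sub>R proj S a"
    using decomp[of a] S subspace_orth_compl[of S]
    by (intro proj_unique[OF S]) (simp_all only: subspace_scale)
qed

lemma subspace_eq_sum_orth_compl_inter: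
  fixes G W :: "'v::euclidean_space set"
  assumes G: "subspace G" and W: "subspace W" and "W \<subseteq> G"
  shows "G = {a + h | a h. a \<in> W \<and> h \<in> G \<inter> orth_compl W}"
proof
  show "G \<subseteq> {a + h | a h. a \<in> W \<and> h \<in> G \<inter> orth_compl W}"
  proof
    fix g assume "g \<in> G"
    moreover note proj_in_orth_decomp[OF W, of g]
    moreover have "g - proj W g \<in> G"
      using \<open>g \<in> G\<close> \<open>W \<subseteq> G\<close> proj_in_orth_decomp[OF W] G by (auto intro: subspace_diff)
    ultimately show "g \<in> {a + h | a h. a \<in> W \<and> h \<in> G \<inter> orth_compl W}"
      by (intro CollectI exI[of _ "proj W g"] exI[of _ "g - proj W g"]) auto
  qed
  show "{a + h | a h. a \<in> W \<and> h \<in> G \<inter> orth_compl W} \<subseteq> G"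
    using assms by (auto intro: subspace_add)
qed

locale almost_eps_contact_space =
  fixes \<epsilon> :: real and \<phi> :: "'v::euclidean_space \<Rightarrow> 'v" and \<xi> :: 'v
  assumes almost_eps_contact: "almost_eps_contact \<epsilon> \<phi> \<xi>"
begin

lemma eps_sq: "\<epsilon> * \<epsilon> = 1"
  using almost_eps_contact unfolding almost_eps_contact_def by auto

lemma linear_phi: "linear \<phi>"
  using almost_eps_contact unfolding almost_eps_contact_def by auto

lemma inner_xi_xi: "\<xi> \<bullet> \<xi> = 1"
  using almost_eps_contact unfolding almost_eps_contact_def by (simp add: norm_eq_1)

lemma inner_phi_left: "\<phi> X \<bullet> Y = \<epsilon> * (X \<bullet> \<phi> Y)"
  using almost_eps_contact unfolding almost_eps_contact_def by auto

lemma phi_phi: "\<phi> (\<phi> X) = \<epsilon> *\<^sub>R (X - (X \<bullet> \<xi>) *\<^sub>R \<xi>)"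
  using almost_eps_contact unfolding almost_eps_contact_def by auto

lemma phi_xi: "\<phi> \<xi> = 0"
proof -
  have "\<phi> \<xi> \<bullet> \<phi> \<xi> = \<epsilon> * (\<xi> \<bullet> \<phi> (\<phi> \<xi>))" by (rule inner_phi_left)
  also have "\<dots> = 0" by (simp add: phi_phi inner_xi_xi)
  finally show ?thesis by simp
qed

lemma inner_phi_xi: "\<phi> X \<bullet> \<xi> = 0"
  by (simp add: inner_phi_left phi_xi)

lemma inner_phi_phi: "\<phi> X \<bullet> \<phi> Y = X \<bullet> Y - (X \<bullet> \<xi>) * (Y \<bullet> \<xi>)"
proof -
  have "\<phi> X \<bullet> \<phi> Y = \<epsilon> * (X \<bullet> \<phi> (\<phi> Y))" by (rule inner_phi_left)
  also have "\<dots> = (\<epsilon> * \<epsilon>) * (X \<bullet> Y - (X \<bullet> \<xi>) * (Y \<bullet> \<xi>))"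
    by (simp add: phi_phi inner_diff_right algebra_simps)
  finally show ?thesis by (simp add: eps_sq)
qed

lemma phi_phi_orth_xi: "X \<bullet> \<xi> = 0 \<Longrightarrow> \<phi> (\<epsilon> *\<^sub>R \<phi> X) = X"
  using linear_scale[OF linear_phi] by (simp add: phi_phi eps_sq)

end

locale k_slant_point = almost_eps_contact_space \<epsilon> \<phi> \<xi>
  for \<epsilon> :: real and \<phi> :: "'v::euclidean_space \<Rightarrow> 'v" and \<xi> :: 'v +
  fixes k :: nat and Di :: "nat \<Rightarrow> 'v set"
  assumes subspace_Di: "i \<in> {0..k} \<Longrightarrow> subspace (Di i)"
    and orthogonal_Di: "\<lbrakk>i \<in> {0..k}; j \<in> {0..k}; i \<noteq> j; a \<in> Di i; b \<in> Di j\<rbrakk> \<Longrightarrow> a \<bullet> b = 0"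
    and phi_invariant_D0: "\<phi> ` Di 0 \<subseteq> Di 0"
    and f_invariant_Di:
      "i \<in> {1..k} \<Longrightarrow> (\<lambda>v. proj (span (\<Union>j\<in>{0..k}. Di j)) (\<phi> v)) ` Di i \<subseteq> Di i"
    and D_orth_xi: "v \<in> span (\<Union>i\<in>{0..k}. Di i) \<Longrightarrow> v \<bullet> \<xi> = 0"
begin

definition D :: "'v set" where "D = span (\<Union>i\<in>{0..k}. Di i)"
definition G :: "'v set" where "G = orth_compl (span (D \<union> {\<xi>}))"
definition f :: "'v \<Rightarrow> 'v" where "f Z = proj D (\<phi> Z)"
definition w :: "'v \<Rightarrow> 'v" where "w Z = proj (orth_compl D) (\<phi> Z)"
definition W :: "'v set" where "W = span (\<Union>i\<in>{1..k}. w ` Di i)"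
definition H :: "'v set" where "H = G \<inter> orth_compl W"

lemma subspace_D: "subspace D"
  unfolding D_def by simp

lemma Di_subset_D: "i \<in> {0..k} \<Longrightarrow> Di i \<subseteq> D"
  unfolding D_def using span_superset by fastforce

lemma f_in_D: "f Z \<in> D"
  unfolding f_def using proj_in_orth_decomp[OF subspace_D] by simp

lemma w_orth_D: "w Z \<in> orth_compl D"
  unfolding w_def by (rule proj_in_orth_decomp[OF subspace_orth_compl])

lemma phi_eq_f_plus_w: "\<phi> Z = f Z + w Z"
  unfolding f_def w_def proj_orth_compl[OF subspace_D] by simp

lemma inner_w_f: "w a \<bullet> f b = 0"
  using w_orth_D f_in_D unfolding orth_compl_def by auto

lemma linear_w: "linear w"
  using linear_compose[OF linear_phi linear_proj[OF subspace_orth_compl[of D]]]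
  by (simp add: w_def[abs_def] o_def)

lemma G_eq: "G = {u. (\<forall>v\<in>D. u \<bullet> v = 0) \<and> u \<bullet> \<xi> = 0}"
  unfolding G_def orth_compl_span unfolding orth_compl_def by auto

lemma subspace_G: "subspace G"
  unfolding G_def by (rule subspace_orth_compl)

lemma w_in_G: "w v \<in> G"
proof -
  have "w v \<bullet> \<xi> = 0"
    using phi_eq_f_plus_w[of v] inner_phi_xi[of v] D_orth_xi f_in_D
    by (simp add: D_def inner_add_left)
  then show ?thesis using w_orth_D unfolding G_eq orth_compl_def by auto
qed

lemma subspace_w_image_Di: "i \<in> {1..k} \<Longrightarrow> subspace (w ` Di i)"
  using linear_subspace_image[OF linear_w] subspace_Di by auto

lemma inner_w_w: "w v \<bullet> w u = \<phi> v \<bullet> \<phi> u - f v \<bullet> f u"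
  by (simp add: phi_eq_f_plus_w[of v] phi_eq_f_plus_w[of u] inner_add_left inner_add_right
      inner_w_f inner_commute[of "f _" "w _"])

lemma orthogonal_w_image_Di:
  assumes i: "i \<in> {1..k}" and j: "j \<in> {1..k}" and "i \<noteq> j" and v: "v \<in> Di i" and u: "u \<in> Di j"
  shows "w v \<bullet> w u = 0"
proof -
  have "f v \<in> Di i" "f u \<in> Di j"
    using f_invariant_Di i j v u unfolding f_def D_def by blast+
  then have "f v \<bullet> f u = 0" and "v \<bullet> u = 0"
    using orthogonal_Di i j \<open>i \<noteq> j\<close> v u by auto
  moreover have "v \<bullet> \<xi> = 0" using D_orth_xi Di_subset_D i v unfolding D_def by force
  ultimately show ?thesis by (simp add: inner_w_w inner_phi_phi)
qed

lemma subspace_W: "subspace W"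
  unfolding W_def by simp

lemma W_subset_G: "W \<subseteq> G"
  unfolding W_def using w_in_G subspace_G by (intro span_minimal) auto

lemma G_eq_W_plus_H: "G = {a + h | a h. a \<in> W \<and> h \<in> H}"
  unfolding H_def using subspace_G subspace_W W_subset_G by (rule subspace_eq_sum_orth_compl_inter)

lemma subspace_H: "subspace H"
  unfolding H_def using subspace_G subspace_orth_compl by (rule subspace_inter)

lemma w_Di_0:
  assumes "v \<in> Di 0"
  shows "w v = 0"
proof -
  have "\<phi> v \<in> D" using assms phi_invariant_D0 Di_subset_D[of 0] by auto
  then have "\<phi> v \<in> orth_compl (orth_compl D)" by (auto simp: orth_compl_def inner_commute)
  then show ?thesis unfolding w_def by (rule proj_eq_0[OF subspace_orth_compl])
qed

lemma w_D_subset_W: "w ` D \<subseteq> W"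
proof -
  have "w v \<in> insert 0 (\<Union>i\<in>{1..k}. w ` Di i)" if "i \<in> {0..k}" "v \<in> Di i" for i v
    using that w_Di_0 by (cases "i = 0") auto
  then have "w ` (\<Union>i\<in>{0..k}. Di i) \<subseteq> insert 0 (\<Union>i\<in>{1..k}. w ` Di i)"
    by blast
  then have "span (w ` (\<Union>i\<in>{0..k}. Di i)) \<subseteq> W"
    unfolding W_def by (metis span_insert_0 span_mono)
  then show ?thesis by (simp add: D_def linear_span_image[OF linear_w])
qed

lemma H_orth_D: "h \<in> H \<Longrightarrow> v \<in> D \<Longrightarrow> h \<bullet> v = 0"
  and H_orth_xi: "h \<in> H \<Longrightarrow> h \<bullet> \<xi> = 0"
  and H_orth_W: "h \<in> H \<Longrightarrow> u \<in> W \<Longrightarrow> h \<bullet> u = 0"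
  unfolding H_def G_eq orth_compl_def by auto

lemma phi_H_orth_D:
  assumes h: "h \<in> H" and v: "v \<in> D"
  shows "\<phi> h \<bullet> v = 0"
proof -
  have "\<phi> h \<bullet> v = \<epsilon> * (h \<bullet> \<phi> v)" by (rule inner_phi_left)
  also have "\<dots> = \<epsilon> * (h \<bullet> f v + h \<bullet> w v)" by (simp add: phi_eq_f_plus_w inner_add_right)
  also have "\<dots> = 0"
    using H_orth_D[OF h f_in_D] H_orth_W[OF h] w_D_subset_W v by auto
  finally show ?thesis .
qed

lemma f_H: "h \<in> H \<Longrightarrow> f h = 0"
  unfolding f_def using phi_H_orth_D
  by (intro proj_eq_0[OF subspace_D]) (auto simp: orth_compl_def)

lemma phi_H_subset: "h \<in> H \<Longrightarrow> \<phi> h \<in> H"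
proof -
  assume h: "h \<in> H"
  have "\<phi> h \<in> G" using phi_H_orth_D[OF h] inner_phi_xi unfolding G_eq by auto
  moreover have "\<phi> h \<bullet> w v = 0" if "v \<in> D" for v
  proof -
    have "\<phi> h \<bullet> w v = \<phi> h \<bullet> \<phi> v - \<phi> h \<bullet> f v"
      by (simp add: phi_eq_f_plus_w[of v] inner_add_right)
    also have "\<dots> = 0"
      using H_orth_D[OF h that] H_orth_xi[OF h] phi_H_orth_D[OF h f_in_D] by (simp add: inner_phi_phi)
    finally show ?thesis .
  qed
  then have "\<phi> h \<in> orth_compl W"
    using Di_subset_D unfolding W_def orth_compl_span by (force simp: orth_compl_def)
  ultimately show ?thesis unfolding H_def by auto
qed

lemma phi_image_H: "\<phi> ` H = H"
proof
  show "\<phi> ` H \<subseteq> H" using phi_H_subset by auto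
  show "H \<subseteq> \<phi> ` H"
  proof
    fix h assume h: "h \<in> H"
    have "\<epsilon> *\<^sub>R \<phi> h \<in> H" using phi_H_subset[OF h] subspace_H by (rule subspace_scale[rotated])
    moreover have "\<phi> (\<epsilon> *\<^sub>R \<phi> h) = h" using H_orth_xi[OF h] by (rule phi_phi_orth_xi)
    ultimately show "h \<in> \<phi> ` H" by (metis image_eqI)
  qed
qed

lemma w_image_H: "w ` H = H"
proof -
  have "w ` H = \<phi> ` H" using phi_eq_f_plus_w f_H by (intro image_cong) auto
  then show ?thesis by (simp add: phi_image_H)
qed

end

theorem mainTheorem5:
  fixes M :: "'x set" and \<epsilon> :: real
    and \<phi> :: "'x \<Rightarrow> 'v::euclidean_space \<Rightarrow> 'v" and \<xi> :: "'x \<Rightarrow> 'v"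
    and k :: nat and Di :: "nat \<Rightarrow> 'x \<Rightarrow> 'v set" and \<theta> :: "nat \<Rightarrow> real"
  assumes ac: "\<forall>x\<in>M. almost_eps_contact \<epsilon> (\<phi> x) (\<xi> x)"
    and ks: "k_slant M \<phi> k Di \<theta>"
    and perp: "\<forall>x\<in>M. \<forall>v\<in>span (\<Union>i\<in>{0..k}. Di i x). v \<bullet> \<xi> x = 0"
  shows "\<forall>x\<in>M.
    let D = span (\<Union>i\<in>{0..k}. Di i x);
        G = orth_compl (span (D \<union> {\<xi> x}));
        f = (\<lambda>Z. proj D (\<phi> x Z));
        w = (\<lambda>Z. proj (orth_compl D) (\<phi> x Z));
        W = span (\<Union>i\<in>{1..k}. w ` Di i x);
        H = G \<inter> orth_compl W
    in (\<forall>i\<in>{1..k}. subspace (w ` Di i x) \<and> w ` Di i x \<subseteq> G) \<and>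
       (\<forall>i\<in>{1..k}. \<forall>j\<in>{1..k}. i \<noteq> j \<longrightarrow> (\<forall>a\<in>w ` Di i x. \<forall>b\<in>w ` Di j x. a \<bullet> b = 0)) \<and>
       G = {a + h | a h. a \<in> W \<and> h \<in> H} \<and>
       f ` H = {0} \<and> \<phi> x ` H = H \<and> w ` H = H"
  apply (intro ballI)
  subgoal premises x_in_M for x
  proof -
    interpret k_slant_point \<epsilon> "\<phi> x" "\<xi> x" k "\<lambda>i. Di i x"
      using ac ks perp x_in_M by unfold_locales (auto simp: k_slant_def)
    have "0 \<in> H" using subspace_H by (rule subspace_0)
    then have "f ` H = {0}" using f_H by auto
    then show ?thesis
      using subspace_w_image_Di w_in_G orthogonal_w_image_Di G_eq_W_plus_H phi_image_H w_image_H
      unfolding Let_def D_def[symmetric] G_def[symmetric] f_def[abs_def, symmetric]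
        w_def[abs_def, symmetric] W_def[symmetric] H_def[symmetric]
      by blast
  qed
  done

end
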